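(* For any CC-MAR instance $(G,\mathcal{T})$, there exists a strategy profile of minimum total cost in which all agents having identical terminal pairs (i.e., $(s_i,t_i)=(s_j,t_j)$) use identical paths.
   Context: A mixed graph $G=(V,E,A)$ has undirected edges $E\subseteq\binom{V}{2}$ with positive integer weights $w_e$ and arcs $A\subseteq V\times V$. A path is a sequence of pairwise distinct vertices in which consecutive vertices are joined by an edge or by an arc in the forward direction. A CC-MAR instance is $(G,\mathcal{T})$ with $\mathcal{T}$ a multiset of $k$ pairs $(s_i,t_i)$ (the same pair may occur several times), each connected by some path. A strategy profile $\mathcal{P}=\{P_1,\dots,P_k\}$ consists of $s_i$-$t_i$ paths. For $\{u,v\}\in E$, $x_{uv}$ is the number of paths traversing it from $u$ to $v$. The total cost is $\mathrm{cost}(\mathcal{P})=\sum_{\{u,v\}\in E}w_{uv}x_{uv}x_{vu}$. *)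

theory Defs
  imports Main
begin

definition mixed_graph :: "'v set \<Rightarrow> 'v set set \<Rightarrow> ('v set \<Rightarrow> nat) \<Rightarrow> ('v \<times> 'v) set \<Rightarrow> bool" where
  "mixed_graph V E w A \<longleftrightarrow> finite V
     \<and> (\<forall>e\<in>E. \<exists>u v. u \<in> V \<and> v \<in> V \<and> u \<noteq> v \<and> e = {u, v})
     \<and> (\<forall>e\<in>E. w e > 0)
     \<and> A \<subseteq> V \<times> V"

definition is_path :: "'v set \<Rightarrow> 'v set set \<Rightarrow> ('v \<times> 'v) set \<Rightarrow> 'v list \<Rightarrow> bool" where
  "is_path V E A p \<longleftrightarrow> p \<noteq> [] \<and> distinct p \<and> set p \<subseteq> V
     \<and> (\<forall>j. Suc j < length p \<longrightarrow> ({p ! j, p ! Suc j} \<in> E \<or> (p ! j, p ! Suc j) \<in> A))"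

definition is_st_path :: "'v set \<Rightarrow> 'v set set \<Rightarrow> ('v \<times> 'v) set \<Rightarrow> 'v \<Rightarrow> 'v \<Rightarrow> 'v list \<Rightarrow> bool" where
  "is_st_path V E A s t p \<longleftrightarrow> is_path V E A p \<and> hd p = s \<and> last p = t"

definition cc_mar_instance :: "'v set \<Rightarrow> 'v set set \<Rightarrow> ('v set \<Rightarrow> nat) \<Rightarrow> ('v \<times> 'v) set \<Rightarrow> ('v \<times> 'v) list \<Rightarrow> bool" where
  "cc_mar_instance V E w A T \<longleftrightarrow> mixed_graph V E w A
     \<and> (\<forall>i < length T. \<exists>p. is_st_path V E A (fst (T ! i)) (snd (T ! i)) p)"

definition strategy_profile :: "'v set \<Rightarrow> 'v set set \<Rightarrow> ('v \<times> 'v) set \<Rightarrow> ('v \<times> 'v) list \<Rightarrow> 'v list list \<Rightarrow> bool" where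
  "strategy_profile V E A T P \<longleftrightarrow> length P = length T
     \<and> (\<forall>i < length T. is_st_path V E A (fst (T ! i)) (snd (T ! i)) (P ! i))"

definition traverses :: "'v list \<Rightarrow> 'v \<Rightarrow> 'v \<Rightarrow> bool" where
  "traverses p u v \<longleftrightarrow> (\<exists>j. Suc j < length p \<and> p ! j = u \<and> p ! Suc j = v)"

definition flow :: "'v list list \<Rightarrow> 'v \<Rightarrow> 'v \<Rightarrow> nat" where
  "flow P u v = card {i. i < length P \<and> traverses (P ! i) u v}"

text \<open>Total cost: sum over edges {u,v} of w_uv * x_uv * x_vu (the product is symmetric in u, v,
so any choice of endpoints representation gives the same value).\<close>

definition total_cost :: "'v set set \<Rightarrow> ('v set \<Rightarrow> nat) \<Rightarrow> 'v list list \<Rightarrow> nat" where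
  "total_cost E w P = (\<Sum>e\<in>E. (let uv = (SOME uv. e = {fst uv, snd uv})
       in w e * flow P (fst uv) (snd uv) * flow P (snd uv) (fst uv)))"

end

theory Submission
  imports Defs
begin

text \<open>Expanding the products x_uv x_vu, the total cost is a sum over ordered pairs of agents (i, j) of the
weight of the edges that P_i traverses in one direction and P_j in the other; a simple path has no such
conflict with itself. Hence, in a class of agents with a common terminal pair, giving every member the
path of the member that conflicts least with the agents outside the class removes all conflicts inside
the class and does not increase those with the outside. Among the profiles of minimum cost, one with
the fewest pairs of agents that share terminals but not paths must therefore have none.\<close>

lemma sum_sum_split_block:
  fixes F :: "'a \<Rightarrow> 'a \<Rightarrow> 'b::comm_monoid_add"
  assumes "finite I" "G \<subseteq> I"
  shows "(\<Sum>a\<in>I. \<Sum>b\<in>I. F a b) = (\<Sum>a\<in>G. \<Sum>b\<in>G. F a b)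
           + (\<Sum>a\<in>G. \<Sum>b\<in>I - G. F a b + F b a) + (\<Sum>a\<in>I - G. \<Sum>b\<in>I - G. F a b)"
proof -
  have sum_split: "sum h I = sum h G + sum h (I - G)" for h :: "'a \<Rightarrow> 'b"
    using assms by (metis sum.subset_diff add.commute)
  have "(\<Sum>a\<in>I - G. \<Sum>b\<in>G. F a b) = (\<Sum>a\<in>G. \<Sum>b\<in>I - G. F b a)"
    by (rule sum.swap)
  then show ?thesis
    by (simp add: sum_split sum.distrib ac_simps)
qed

lemma sum_sum_override_block_le:
  fixes D :: "'p \<Rightarrow> 'p \<Rightarrow> nat" and f :: "'a \<Rightarrow> 'p"
  assumes "finite I" "G \<subseteq> I" "D p p = 0"
    and "\<And>a. a \<in> G \<Longrightarrow> (\<Sum>k\<in>I - G. D p (f k) + D (f k) p) \<le> (\<Sum>k\<in>I - G. D (f a) (f k) + D (f k) (f a))"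
  shows "(\<Sum>a\<in>I. \<Sum>b\<in>I. D (if a \<in> G then p else f a) (if b \<in> G then p else f b))
           \<le> (\<Sum>a\<in>I. \<Sum>b\<in>I. D (f a) (f b))"
proof -
  let ?g = "\<lambda>a. if a \<in> G then p else f a"
  have "(\<Sum>a\<in>I. \<Sum>b\<in>I. D (?g a) (?g b))
      = (\<Sum>a\<in>G. \<Sum>k\<in>I - G. D p (f k) + D (f k) p) + (\<Sum>a\<in>I - G. \<Sum>b\<in>I - G. D (f a) (f b))"
    using assms(3) by (simp add: sum_sum_split_block[OF assms(1,2)])
  also have "\<dots> \<le> (\<Sum>a\<in>G. \<Sum>k\<in>I - G. D (f a) (f k) + D (f k) (f a))
      + (\<Sum>a\<in>I - G. \<Sum>b\<in>I - G. D (f a) (f b))"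
    by (rule add_right_mono, rule sum_mono, rule assms(4))
  also have "\<dots> \<le> (\<Sum>a\<in>I. \<Sum>b\<in>I. D (f a) (f b))"
    by (simp add: sum_sum_split_block[OF assms(1,2), of "\<lambda>a b. D (f a) (f b)"])
  finally show ?thesis .
qed

lemma traverses_antisym:
  assumes "distinct p" "traverses p u v"
  shows "\<not> traverses p v u"
proof
  assume "traverses p v u"
  then obtain k where k: "Suc k < length p" "p ! k = v" "p ! Suc k = u"
    unfolding traverses_def by blast
  obtain j where j: "Suc j < length p" "p ! j = u" "p ! Suc j = v"
    using assms(2) unfolding traverses_def by blast
  have "j = Suc k" "Suc j = k"
    using j k assms(1) nth_eq_iff_index_eq by (metis Suc_lessD)+
  then show False by simp
qed

definition conflict_cost :: "'v set set \<Rightarrow> ('v set \<Rightarrow> nat) \<Rightarrow> 'v list \<Rightarrow> 'v list \<Rightarrow> nat" where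
  "conflict_cost E w p q = (\<Sum>e\<in>E. (let uv = (SOME uv. e = {fst uv, snd uv})
       in w e * of_bool (traverses p (fst uv) (snd uv)) * of_bool (traverses q (snd uv) (fst uv))))"

lemma flow_eq_sum: "flow P u v = (\<Sum>i<length P. of_bool (traverses (P ! i) u v))"
  unfolding flow_def by (simp add: sum.If_cases lessThan_def Collect_conj_eq Int_commute)

lemma total_cost_eq_sum_conflict_cost:
  "total_cost E w P = (\<Sum>i<length P. \<Sum>j<length P. conflict_cost E w (P ! i) (P ! j))"
proof -
  have scaled_product: "c * sum a A * sum b B = (\<Sum>i\<in>A. \<Sum>j\<in>B. c * a i * b j)"
    for c :: nat and a b :: "nat \<Rightarrow> nat" and A B
    by (metis sum_distrib_left sum_product)
  have "total_cost E w P = (\<Sum>e\<in>E. \<Sum>i<length P. \<Sum>j<length P. (let uv = (SOME uv. e = {fst uv, snd uv})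
       in w e * of_bool (traverses (P ! i) (fst uv) (snd uv)) * of_bool (traverses (P ! j) (snd uv) (fst uv))))"
    unfolding total_cost_def flow_eq_sum Let_def scaled_product ..
  also have "\<dots> = (\<Sum>i<length P. \<Sum>j<length P. conflict_cost E w (P ! i) (P ! j))"
    unfolding conflict_cost_def by (subst sum.swap) (simp only: sum.swap[where A = E])
  finally show ?thesis .
qed

lemma conflict_cost_self: "distinct p \<Longrightarrow> conflict_cost E w p p = 0"
  unfolding conflict_cost_def Let_def by (rule sum.neutral) (auto dest: traverses_antisym)

definition min_cost_profile ::
    "'v set \<Rightarrow> 'v set set \<Rightarrow> ('v set \<Rightarrow> nat) \<Rightarrow> ('v \<times> 'v) set \<Rightarrow> ('v \<times> 'v) list \<Rightarrow> 'v list list \<Rightarrow> bool" where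
  "min_cost_profile V E w A T P \<longleftrightarrow> strategy_profile V E A T P
     \<and> (\<forall>Q. strategy_profile V E A T Q \<longrightarrow> total_cost E w P \<le> total_cost E w Q)"

definition disagreements :: "('v \<times> 'v) list \<Rightarrow> 'v list list \<Rightarrow> (nat \<times> nat) set" where
  "disagreements T P = {(i, j). i < length T \<and> j < length T \<and> T ! i = T ! j \<and> P ! i \<noteq> P ! j}"

definition reroute_class :: "('v \<times> 'v) list \<Rightarrow> 'v list list \<Rightarrow> 'v \<times> 'v \<Rightarrow> 'v list \<Rightarrow> 'v list list" where
  "reroute_class T P c p = map (\<lambda>a. if T ! a = c then p else P ! a) [0..<length T]"

definition outside_conflict ::
    "'v set set \<Rightarrow> ('v set \<Rightarrow> nat) \<Rightarrow> ('v \<times> 'v) list \<Rightarrow> 'v list list \<Rightarrow> 'v \<times> 'v \<Rightarrow> 'v list \<Rightarrow> nat" where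
  "outside_conflict E w T P c q =
     (\<Sum>k | k < length T \<and> T ! k \<noteq> c. conflict_cost E w q (P ! k) + conflict_cost E w (P ! k) q)"

lemma ex_strategy_profile:
  assumes "cc_mar_instance V E w A T"
  shows "\<exists>P. strategy_profile V E A T P"
proof -
  let ?path = "\<lambda>i. SOME p. is_st_path V E A (fst (T ! i)) (snd (T ! i)) p"
  have "is_st_path V E A (fst (T ! i)) (snd (T ! i)) (?path i)" if "i < length T" for i
    using assms that unfolding cc_mar_instance_def by (blast intro: someI_ex)
  then have "strategy_profile V E A T (map ?path [0..<length T])"
    unfolding strategy_profile_def by simp
  then show ?thesis ..
qed

lemma ex_min_cost_profile:
  assumes "cc_mar_instance V E w A T"
  shows "\<exists>P. min_cost_profile V E w A T P"
  using ex_has_least_nat[of "strategy_profile V E A T" _ "total_cost E w"] ex_strategy_profile[OF assms]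
  unfolding min_cost_profile_def by blast

lemma length_reroute_class [simp]: "length (reroute_class T P c p) = length T"
  unfolding reroute_class_def by simp

lemma nth_reroute_class:
  "a < length T \<Longrightarrow> reroute_class T P c p ! a = (if T ! a = c then p else P ! a)"
  unfolding reroute_class_def by simp

lemma strategy_profile_reroute_class:
  assumes "strategy_profile V E A T P" "is_st_path V E A (fst c) (snd c) p"
  shows "strategy_profile V E A T (reroute_class T P c p)"
  using assms unfolding strategy_profile_def by (auto simp: nth_reroute_class)

lemma disagreements_reroute_class:
  "disagreements T (reroute_class T P c p) = {(i, j) \<in> disagreements T P. T ! i \<noteq> c}"
  unfolding disagreements_def by (auto simp: nth_reroute_class split: if_splits)

lemma finite_disagreements: "finite (disagreements T P)"
  by (rule finite_subset[of _ "{..<length T} \<times> {..<length T}"]) (auto simp: disagreements_def)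

lemma total_cost_reroute_class_le:
  assumes "length P = length T" "distinct p"
    and "\<And>a. a < length T \<Longrightarrow> T ! a = c \<Longrightarrow> outside_conflict E w T P c p \<le> outside_conflict E w T P c (P ! a)"
  shows "total_cost E w (reroute_class T P c p) \<le> total_cost E w P"
proof -
  define I where "I = {..<length T}"
  define G where "G = {a \<in> I. T ! a = c}"
  have outside: "{k. k < length T \<and> T ! k \<noteq> c} = I - G"
    unfolding I_def G_def by auto
  have "total_cost E w (reroute_class T P c p)
      = (\<Sum>a\<in>I. \<Sum>b\<in>I. conflict_cost E w (if a \<in> G then p else P ! a) (if b \<in> G then p else P ! b))"
    unfolding total_cost_eq_sum_conflict_cost by (auto simp: I_def G_def nth_reroute_class intro!: sum.cong)
  also have "\<dots> \<le> (\<Sum>a\<in>I. \<Sum>b\<in>I. conflict_cost E w (P ! a) (P ! b))"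
    using assms(3) conflict_cost_self[OF assms(2)]
    by (intro sum_sum_override_block_le) (auto simp: I_def G_def outside_conflict_def outside)
  also have "\<dots> = total_cost E w P"
    unfolding total_cost_eq_sum_conflict_cost I_def assms(1) ..
  finally show ?thesis .
qed

lemma min_cost_profile_reduce_disagreements:
  assumes opt: "min_cost_profile V E w A T P" and disagree: "(i, j) \<in> disagreements T P"
  shows "\<exists>Q. min_cost_profile V E w A T Q \<and> card (disagreements T Q) < card (disagreements T P)"
proof -
  let ?c = "T ! i"
  have sp: "strategy_profile V E A T P" and i: "i < length T"
    using opt disagree unfolding min_cost_profile_def disagreements_def by auto
  obtain a0 where a0: "a0 < length T \<and> T ! a0 = ?c"
    and least: "\<And>a. a < length T \<and> T ! a = ?c \<Longrightarrow>
                  outside_conflict E w T P ?c (P ! a0) \<le> outside_conflict E w T P ?c (P ! a)"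
    using ex_has_least_nat[of "\<lambda>a. a < length T \<and> T ! a = ?c" i "\<lambda>a. outside_conflict E w T P ?c (P ! a)"] i
    by blast
  have path: "is_st_path V E A (fst ?c) (snd ?c) (P ! a0)"
    using sp a0 unfolding strategy_profile_def by metis
  define Q where "Q = reroute_class T P ?c (P ! a0)"
  have "strategy_profile V E A T Q"
    unfolding Q_def using sp path by (rule strategy_profile_reroute_class)
  moreover have "total_cost E w Q \<le> total_cost E w P"
    unfolding Q_def using sp path least
    by (intro total_cost_reroute_class_le) (auto simp: strategy_profile_def is_st_path_def is_path_def)
  ultimately have "min_cost_profile V E w A T Q"
    using opt unfolding min_cost_profile_def by (meson le_trans)
  moreover have "disagreements T Q \<subset> disagreements T P"
    using disagree unfolding Q_def disagreements_reroute_class by blast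
  then have "card (disagreements T Q) < card (disagreements T P)"
    by (rule psubset_card_mono[OF finite_disagreements])
  ultimately show ?thesis by blast
qed

theorem mainTheorem7:
  fixes V :: "'v set" and E :: "'v set set" and w :: "'v set \<Rightarrow> nat"
    and A :: "('v \<times> 'v) set" and T :: "('v \<times> 'v) list"
  assumes "cc_mar_instance V E w A T"
  shows "\<exists>P. strategy_profile V E A T P
           \<and> (\<forall>Q. strategy_profile V E A T Q \<longrightarrow> total_cost E w P \<le> total_cost E w Q)
           \<and> (\<forall>i < length T. \<forall>j < length T. T ! i = T ! j \<longrightarrow> P ! i = P ! j)"
proof -
  obtain P where opt: "min_cost_profile V E w A T P"
    and fewest: "\<And>Q. min_cost_profile V E w A T Q \<Longrightarrow> card (disagreements T P) \<le> card (disagreements T Q)"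
    using ex_has_least_nat[of "min_cost_profile V E w A T" _ "\<lambda>P. card (disagreements T P)"]
      ex_min_cost_profile[OF assms] by metis
  have "disagreements T P = {}"
  proof (rule ccontr)
    assume "disagreements T P \<noteq> {}"
    then obtain i j where "(i, j) \<in> disagreements T P" by auto
    then obtain Q where "min_cost_profile V E w A T Q" "card (disagreements T Q) < card (disagreements T P)"
      using min_cost_profile_reduce_disagreements[OF opt] by blast
    with fewest show False by (meson leD)
  qed
  then show ?thesis
    using opt unfolding min_cost_profile_def disagreements_def by blast
qed

end
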